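(* (Working in $\mathbf{ZF}+\mathbf{UFT}$.) A weakly normal generalized topological space $X$ has its Wallman strict compactification if and only if the operator $\mathrm{Ex}_{\mathcal W(X,\mathrm{Cl}_X)}$ is admissibly additive.
   Context: $\mathbf{UFT}$ is the Ultrafilter Theorem (every filter on a set extends to an ultrafilter). A generalized topological space (gts) $(X,\mathrm{Op}_X,\mathrm{Cov}_X)$ is in the sense of Delfs–Knebusch: $\mathrm{Op}_X\subseteq\mathcal P(X)$, $\mathrm{Cov}_X\subseteq\mathcal P(\mathrm{Op}_X)$ with (A1) $\emptyset,X$ open; (A2) finite unions/intersections of open sets open; (A3) finite families of open sets in $\mathrm{Cov}_X$; (A4) unions of members of $\mathrm{Cov}_X$ open; (A5) for $\mathcal U\in\mathrm{Cov}_X$ and open $V\subseteq\bigcup\mathcal U$, $\{V\cap U:U\in\mathcal U\}\in\mathrm{Cov}_X$; (A6) if $\mathcal U\in\mathrm{Cov}_X$ and $\mathcal V_U\in\mathrm{Cov}_X$ with $\bigcup\mathcal V_U=U$ then $\bigcup_U\mathcal V_U\in\mathrm{Cov}_X$; (A7) if $\mathcal U\in\mathrm{Cov}_X$, $\mathcal V\subseteq\mathrm{Op}_X$, $\bigcup\mathcal V=\bigcup\mathcal U$ and each member of $\mathcal U$ is in a member of $\mathcal V$, then $\mathcal V\in\mathrm{Cov}_X$; (A8) if $\mathcal U\in\mathrm{Cov}_X$, $V\subseteq\bigcup\mathcal U$ and all $V\cap U$ open, then $V$ open. A generalized topology in a set $Z$ is a $\mathrm{Cov}$ with $(Z,\bigcup\mathrm{Cov},\mathrm{Cov})$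 a gts. $\mathrm{Cl}_X$ = complements of open sets; $X_{top}$ = $X$ with topology generated by $\mathrm{Op}_X$. $X$ is weakly normal if disjoint sets, each a singleton or in $\mathrm{Cl}_X$, lie in disjoint open sets. $\mathcal W=\mathcal W(X,\mathrm{Cl}_X)$ is the set of ultrafilters (maximal filters) in $\mathrm{Cl}_X$ with closed base $\{[A]:A\in\mathrm{Cl}_X\}$, $[A]=\{p:A\in p\}$; $w(x)=\{A\in\mathrm{Cl}_X:x\in A\}$; when $\mathcal W$ is compact, $w$ embeds $X_{top}$ densely and $X$ is identified with $w(X)$. Define $\mathrm{Ex}_{\mathcal W}(U)=\mathcal W\setminus\mathrm{cl}_{\mathcal W}(X\setminus U)$ ($U\in\mathrm{Op}_X$); it is admissibly additive if $\mathrm{Ex}_{\mathcal W}(\bigcup\mathcal U)=\bigcup_{U\in\mathcal U}\mathrm{Ex}_{\mathcal W}(U)$ for all $\mathcal U\in\mathrm{Cov}_X$. Let $\mathrm{Op}^S=\{V\text{ open in }\mathcal W:V\cap X\in\mathrm{Op}_X\}$, $\mathrm{Cov}^S=\{\mathcal V\subseteq\mathrm{Op}^S:\{V\cap X:V\in\mathcal V\}\in\mathrm{Cov}_X\}$, $\mathrm{Op}^w=\{\mathrm{Ex}_{\mathcal W}(U):U\in\mathrm{Op}_X\}$, $\mathrm{Cov}^w=\{\mathcal V\in\mathrm{Cov}^S:\mathcal V\subseteq\mathrm{Op}^w\}$. $X$ has its Wallman strict compactification if $\mathcal W$ is compact and $\mathrm{Cov}^w$ is a generalized topology in $\mathcal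 W$. *)

theory Defs
  imports "HOL-Analysis.Analysis"
begin

definition gts :: "'a set \<Rightarrow> 'a set set \<Rightarrow> 'a set set set \<Rightarrow> bool" where
  "gts X Op Cov \<longleftrightarrow>
     Op \<subseteq> Pow X \<and> Cov \<subseteq> Pow Op \<and>
     \<comment> \<open>(A1)\<close>
     {} \<in> Op \<and> X \<in> Op \<and>
     \<comment> \<open>(A2)\<close>
     (\<forall>U\<in>Op. \<forall>V\<in>Op. U \<union> V \<in> Op \<and> U \<inter> V \<in> Op) \<and>
     \<comment> \<open>(A3)\<close>
     (\<forall>\<U>. finite \<U> \<and> \<U> \<subseteq> Op \<longrightarrow> \<U> \<in> Cov) \<and>
     \<comment> \<open>(A4)\<close>
     (\<forall>\<U>\<in>Cov. \<Union>\<U> \<in> Op) \<and>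
     \<comment> \<open>(A5)\<close>
     (\<forall>\<U>\<in>Cov. \<forall>V\<in>Op. V \<subseteq> \<Union>\<U> \<longrightarrow> (\<lambda>U. V \<inter> U) ` \<U> \<in> Cov) \<and>
     \<comment> \<open>(A6)\<close>
     (\<forall>\<U>\<in>Cov. \<forall>\<V>. (\<forall>U\<in>\<U>. \<V> U \<in> Cov \<and> \<Union>(\<V> U) = U) \<longrightarrow> \<Union>(\<V> ` \<U>) \<in> Cov) \<and>
     \<comment> \<open>(A7)\<close>
     (\<forall>\<U>\<in>Cov. \<forall>\<V>. \<V> \<subseteq> Op \<and> \<Union>\<V> = \<Union>\<U> \<and> (\<forall>U\<in>\<U>. \<exists>V\<in>\<V>. U \<subseteq> V) \<longrightarrow> \<V> \<in> Cov) \<and>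
     \<comment> \<open>(A8)\<close>
     (\<forall>\<U>\<in>Cov. \<forall>V. V \<subseteq> \<Union>\<U> \<and> (\<forall>U\<in>\<U>. V \<inter> U \<in> Op) \<longrightarrow> V \<in> Op)"

definition gen_topology_in :: "'a set \<Rightarrow> 'a set set set \<Rightarrow> bool" where
  "gen_topology_in Z Cov \<longleftrightarrow> gts Z (\<Union>Cov) Cov"

definition Cl :: "'a set \<Rightarrow> 'a set set \<Rightarrow> 'a set set" where
  "Cl X Op = (\<lambda>U. X - U) ` Op"

definition weakly_normal :: "'a set \<Rightarrow> 'a set set \<Rightarrow> bool" where
  "weakly_normal X Op \<longleftrightarrow>
     (\<forall>A B. (A \<in> Cl X Op \<or> (\<exists>x\<in>X. A = {x})) \<and> (B \<in> Cl X Op \<or> (\<exists>x\<in>X. B = {x}))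
        \<and> A \<inter> B = {} \<longrightarrow>
        (\<exists>U\<in>Op. \<exists>V\<in>Op. A \<subseteq> U \<and> B \<subseteq> V \<and> U \<inter> V = {}))"

definition fam_filter :: "'a set set \<Rightarrow> 'a set set \<Rightarrow> bool" where
  "fam_filter L F \<longleftrightarrow> F \<subseteq> L \<and> F \<noteq> {} \<and> {} \<notin> F \<and>
     (\<forall>A\<in>F. \<forall>B\<in>F. A \<inter> B \<in> F) \<and>
     (\<forall>A\<in>F. \<forall>B\<in>L. A \<subseteq> B \<longrightarrow> B \<in> F)"

definition fam_ultrafilter :: "'a set set \<Rightarrow> 'a set set \<Rightarrow> bool" where
  "fam_ultrafilter L F \<longleftrightarrow> fam_filter L F \<and> (\<forall>G. fam_filter L G \<and> F \<subseteq> G \<longrightarrow> G = F)"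

definition Wal :: "'a set \<Rightarrow> 'a set set \<Rightarrow> 'a set set set" where
  "Wal X Op = {p. fam_ultrafilter (Cl X Op) p}"

definition wbox :: "'a set \<Rightarrow> 'a set set \<Rightarrow> 'a set \<Rightarrow> 'a set set set" where
  "wbox X Op A = {p \<in> Wal X Op. A \<in> p}"

definition wal_top :: "'a set \<Rightarrow> 'a set set \<Rightarrow> 'a set set topology" where
  "wal_top X Op = subtopology
     (topology_generated_by ((\<lambda>A. Wal X Op - wbox X Op A) ` Cl X Op)) (Wal X Op)"

definition wmap :: "'a set \<Rightarrow> 'a set set \<Rightarrow> 'a \<Rightarrow> 'a set set" where
  "wmap X Op x = {A \<in> Cl X Op. x \<in> A}"

text \<open>Ex_W(U) = W \ cl_W(X \ U), with X identified with w(X).\<close>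
definition Ex :: "'a set \<Rightarrow> 'a set set \<Rightarrow> 'a set \<Rightarrow> 'a set set set" where
  "Ex X Op U = Wal X Op - (wal_top X Op closure_of (wmap X Op ` (X - U)))"

definition admissibly_additive :: "'a set \<Rightarrow> 'a set set \<Rightarrow> 'a set set set \<Rightarrow> bool" where
  "admissibly_additive X Op Cov \<longleftrightarrow>
     (\<forall>\<U>\<in>Cov. Ex X Op (\<Union>\<U>) = (\<Union>U\<in>\<U>. Ex X Op U))"

definition OpS :: "'a set \<Rightarrow> 'a set set \<Rightarrow> 'a set set set set" where
  "OpS X Op = {V. openin (wal_top X Op) V \<and> {x \<in> X. wmap X Op x \<in> V} \<in> Op}"

definition CovS :: "'a set \<Rightarrow> 'a set set \<Rightarrow> 'a set set set \<Rightarrow> 'a set set set set set" where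
  "CovS X Op Cov = {\<V>. \<V> \<subseteq> OpS X Op \<and>
      (\<lambda>V. {x \<in> X. wmap X Op x \<in> V}) ` \<V> \<in> Cov}"

definition Opw :: "'a set \<Rightarrow> 'a set set \<Rightarrow> 'a set set set set" where
  "Opw X Op = Ex X Op ` Op"

definition Covw :: "'a set \<Rightarrow> 'a set set \<Rightarrow> 'a set set set \<Rightarrow> 'a set set set set set" where
  "Covw X Op Cov = {\<V> \<in> CovS X Op Cov. \<V> \<subseteq> Opw X Op}"

definition has_wallman_strict_compactification ::
  "'a set \<Rightarrow> 'a set set \<Rightarrow> 'a set set set \<Rightarrow> bool" where
  "has_wallman_strict_compactification X Op Cov \<longleftrightarrow>
     compact_space (wal_top X Op) \<and> gen_topology_in (Wal X Op) (Covw X Op Cov)"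

end

theory Submission
  imports Defs
begin

text \<open>The Wallman space \<open>\<W>\<close> of ultrafilters of closed sets is compact by the Ultrafilter
  Theorem, and weak normality makes every trace filter \<open>w(x)\<close> an ultrafilter, with
  \<open>cl(w(A)) = [A]\<close> for closed \<open>A\<close>. Hence \<open>Ex(U) = \<W> - [X - U]\<close>, so \<open>Ex\<close> is a
  meet-preserving embedding of the open sets of \<open>X\<close> into those of \<open>\<W>\<close> whose trace on \<open>X\<close>
  gives back \<open>U\<close>, and the covers in \<open>Cov\<^sup>w\<close> are exactly the images of the admissible covers
  of \<open>X\<close>. Transporting the axioms along such an embedding works precisely when it sends admissible
  unions to unions: the union of a transported cover must be some \<open>Ex(V)\<close>, and taking traces
  forces \<open>V\<close> to be the union of the original cover; conversely, additivity supplies the axioms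
  about unions, and the remaining ones hold for any such embedding.\<close>

section \<open>Filters in a lattice of sets\<close>

lemma fam_filter_subset: "fam_filter L F \<Longrightarrow> F \<subseteq> L"
  by (simp add: fam_filter_def)

lemma fam_filter_nonempty: "fam_filter L F \<Longrightarrow> F \<noteq> {}"
  by (simp add: fam_filter_def)

lemma fam_filter_empty: "fam_filter L F \<Longrightarrow> {} \<notin> F"
  by (simp add: fam_filter_def)

lemma fam_filter_Int: "fam_filter L F \<Longrightarrow> A \<in> F \<Longrightarrow> B \<in> F \<Longrightarrow> A \<inter> B \<in> F"
  by (simp add: fam_filter_def)

lemma fam_filter_mono: "fam_filter L F \<Longrightarrow> A \<in> F \<Longrightarrow> B \<in> L \<Longrightarrow> A \<subseteq> B \<Longrightarrow> B \<in> F"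
  by (simp add: fam_filter_def)

lemma fam_filter_Union_chain:
  assumes "\<C> \<noteq> {}" and "subset.chain {F. fam_filter L F} \<C>"
  shows "fam_filter L (\<Union>\<C>)"
proof -
  have filters: "\<And>F. F \<in> \<C> \<Longrightarrow> fam_filter L F"
    and comparable: "\<And>F G. F \<in> \<C> \<Longrightarrow> G \<in> \<C> \<Longrightarrow> F \<subseteq> G \<or> G \<subseteq> F"
    using assms(2) by (auto simp: subset_chain_def)
  show ?thesis
    unfolding fam_filter_def
  proof (intro conjI ballI impI)
    show "\<Union>\<C> \<subseteq> L"
      using filters fam_filter_subset by blast
    show "{} \<notin> \<Union>\<C>"
      using filters fam_filter_empty by blast
    obtain F where "F \<in> \<C>"
      using assms(1) by blast
    then show "\<Union>\<C> \<noteq> {}"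
      using filters fam_filter_nonempty by blast
  next
    fix A B assume "A \<in> \<Union>\<C>" "B \<in> \<Union>\<C>"
    then obtain F G where FG: "F \<in> \<C>" "G \<in> \<C>" "A \<in> F" "B \<in> G" by blast
    show "A \<inter> B \<in> \<Union>\<C>"
    proof (cases "F \<subseteq> G")
      case True
      then show ?thesis using FG fam_filter_Int[OF filters[of G]] by blast
    next
      case False
      then have "G \<subseteq> F" using comparable FG by blast
      then show ?thesis using FG fam_filter_Int[OF filters[of F]] by blast
    qed
  next
    fix A B assume "A \<in> \<Union>\<C>" "B \<in> L" "A \<subseteq> B"
    then obtain F where "F \<in> \<C>" "A \<in> F" by blast
    then show "B \<in> \<Union>\<C>"
      using fam_filter_mono[OF filters[of F]] \<open>B \<in> L\<close> \<open>A \<subseteq> B\<close> by blast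
  qed
qed

text \<open>This is where the Ultrafilter Theorem enters, via Zorn's lemma.\<close>

lemma fam_filter_extends_to_ultrafilter:
  assumes "fam_filter L F"
  shows "\<exists>p. fam_ultrafilter L p \<and> F \<subseteq> p"
proof -
  let ?\<A> = "{G. fam_filter L G \<and> F \<subseteq> G}"
  have "\<exists>M\<in>?\<A>. \<forall>G\<in>?\<A>. M \<subseteq> G \<longrightarrow> G = M"
  proof (rule subset_Zorn_nonempty)
    fix \<C> assume C: "\<C> \<noteq> {}" "subset.chain ?\<A> \<C>"
    then have sub: "\<C> \<subseteq> ?\<A>" and comparable: "\<forall>X\<in>\<C>. \<forall>Y\<in>\<C>. X \<subseteq> Y \<or> Y \<subseteq> X"
      by (simp_all add: subset_chain_def)
    have "subset.chain {G. fam_filter L G} \<C>"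
      unfolding subset_chain_def using sub comparable by blast
    then have "fam_filter L (\<Union>\<C>)"
      by (rule fam_filter_Union_chain[OF C(1)])
    moreover obtain G where "G \<in> \<C>"
      using C(1) by blast
    then have "F \<subseteq> \<Union>\<C>"
      using sub by blast
    ultimately show "\<Union>\<C> \<in> ?\<A>" by blast
  qed (use assms in blast)
  then obtain M where M: "M \<in> ?\<A>" and maximal: "\<forall>G\<in>?\<A>. M \<subseteq> G \<longrightarrow> G = M" ..
  from M have filter: "fam_filter L M" and "F \<subseteq> M"
    by simp_all
  have "fam_ultrafilter L M"
    unfolding fam_ultrafilter_def
  proof (intro conjI allI impI filter)
    fix G assume G: "fam_filter L G \<and> M \<subseteq> G"
    then have "G \<in> ?\<A>"
      using \<open>F \<subseteq> M\<close> by auto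
    then show "G = M"
      using G maximal by blast
  qed
  then show ?thesis
    using \<open>F \<subseteq> M\<close> by blast
qed

locale set_lattice =
  fixes X :: "'a set" and L :: "'a set set"
  assumes lattice_subset: "L \<subseteq> Pow X"
    and empty_in_lattice: "{} \<in> L" and top_in_lattice: "X \<in> L"
    and Int_in_lattice: "A \<in> L \<Longrightarrow> B \<in> L \<Longrightarrow> A \<inter> B \<in> L"
    and Un_in_lattice: "A \<in> L \<Longrightarrow> B \<in> L \<Longrightarrow> A \<union> B \<in> L"
begin

lemma Cl_lattice: "set_lattice X (Cl X L)"
proof
  show "Cl X L \<subseteq> Pow X"
    by (auto simp: Cl_def)
  show "{} \<in> Cl X L" "X \<in> Cl X L"
    using top_in_lattice empty_in_lattice by (auto simp: Cl_def)
next
  fix A B assume "A \<in> Cl X L" "B \<in> Cl X L"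
  then obtain U V where UV: "U \<in> L" "V \<in> L" "A = X - U" "B = X - V"
    by (auto simp: Cl_def)
  then have "A \<inter> B = X - (U \<union> V)" "A \<union> B = X - (U \<inter> V)"
    by auto
  then show "A \<inter> B \<in> Cl X L" "A \<union> B \<in> Cl X L"
    using UV Un_in_lattice Int_in_lattice by (auto simp: Cl_def)
qed

context
  fixes p assumes p: "fam_ultrafilter L p"
begin

lemma ultrafilter_filter: "fam_filter L p"
  using p by (simp add: fam_ultrafilter_def)

lemma ultrafilter_top: "X \<in> p"
proof -
  obtain A where "A \<in> p"
    using fam_filter_nonempty[OF ultrafilter_filter] by blast
  moreover have "A \<subseteq> X"
    using calculation fam_filter_subset[OF ultrafilter_filter] lattice_subset by blast
  ultimately show ?thesis
    using fam_filter_mono[OF ultrafilter_filter _ top_in_lattice] by blast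
qed

lemma ultrafilter_disjoint_if_notin:
  assumes C: "C \<in> L" "C \<notin> p"
  shows "\<exists>D\<in>p. C \<inter> D = {}"
proof (rule ccontr)
  assume meets: "\<not> (\<exists>D\<in>p. C \<inter> D = {})"
  define H where "H = {E\<in>L. \<exists>D\<in>p. C \<inter> D \<subseteq> E}"
  have "fam_filter L H"
    unfolding fam_filter_def
  proof (intro conjI ballI impI)
    show "H \<subseteq> L" "H \<noteq> {}" "{} \<notin> H"
      unfolding H_def using meets C(1) ultrafilter_top by blast+
  next
    fix A B assume "A \<in> H" "B \<in> H"
    then obtain D1 D2 where "A \<in> L" "B \<in> L" "D1 \<in> p" "D2 \<in> p" "C \<inter> D1 \<subseteq> A" "C \<inter> D2 \<subseteq> B"
      unfolding H_def by blast
    moreover have "D1 \<inter> D2 \<in> p"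
      using fam_filter_Int[OF ultrafilter_filter] calculation by blast
    ultimately show "A \<inter> B \<in> H"
      unfolding H_def using Int_in_lattice by blast
  next
    fix A B assume "A \<in> H" "B \<in> L" "A \<subseteq> B"
    then show "B \<in> H" unfolding H_def by blast
  qed
  moreover have "p \<subseteq> H"
    unfolding H_def using fam_filter_subset[OF ultrafilter_filter] by blast
  ultimately have "H = p"
    using p by (simp add: fam_ultrafilter_def)
  moreover have "C \<in> H"
    unfolding H_def using C(1) ultrafilter_top by blast
  ultimately show False using C(2) by blast
qed

lemma ultrafilter_Un_iff:
  assumes "A \<in> L" "B \<in> L"
  shows "A \<union> B \<in> p \<longleftrightarrow> A \<in> p \<or> B \<in> p"
proof
  assume AB: "A \<union> B \<in> p"
  show "A \<in> p \<or> B \<in> p"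
  proof (rule ccontr)
    assume "\<not> (A \<in> p \<or> B \<in> p)"
    then have "A \<notin> p" "B \<notin> p" by simp_all
    obtain D1 where D1: "D1 \<in> p" "A \<inter> D1 = {}"
      using ultrafilter_disjoint_if_notin[OF assms(1) \<open>A \<notin> p\<close>] by blast
    obtain D2 where D2: "D2 \<in> p" "B \<inter> D2 = {}"
      using ultrafilter_disjoint_if_notin[OF assms(2) \<open>B \<notin> p\<close>] by blast
    have "(A \<union> B) \<inter> (D1 \<inter> D2) \<in> p"
      using fam_filter_Int[OF ultrafilter_filter AB fam_filter_Int[OF ultrafilter_filter D1(1) D2(1)]] .
    moreover have "(A \<union> B) \<inter> (D1 \<inter> D2) = {}"
      using D1(2) D2(2) by blast
    ultimately show False
      using fam_filter_empty[OF ultrafilter_filter] by simp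
  qed
next
  assume "A \<in> p \<or> B \<in> p"
  then show "A \<union> B \<in> p"
    using fam_filter_mono[OF ultrafilter_filter _ Un_in_lattice[OF assms]] by blast
qed

lemma ultrafilter_Inter: "finite S \<Longrightarrow> S \<subseteq> p \<Longrightarrow> X \<inter> \<Inter>S \<in> p"
proof (induction S rule: finite_induct)
  case (insert A S)
  then have "A \<inter> (X \<inter> \<Inter>S) \<in> p"
    using fam_filter_Int[OF ultrafilter_filter] by simp
  moreover have "A \<inter> (X \<inter> \<Inter>S) = X \<inter> \<Inter>(insert A S)"
    by blast
  ultimately show ?case
    by simp
qed (simp add: ultrafilter_top)

end

lemma ultrafilter_containing_fip:
  assumes "\<C> \<subseteq> L" and fip: "\<And>S. finite S \<Longrightarrow> S \<subseteq> \<C> \<Longrightarrow> X \<inter> \<Inter>S \<noteq> {}"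
  shows "\<exists>p. fam_ultrafilter L p \<and> \<C> \<subseteq> p"
proof -
  define F where "F = {A\<in>L. \<exists>S. finite S \<and> S \<subseteq> \<C> \<and> X \<inter> \<Inter>S \<subseteq> A}"
  have "fam_filter L F"
    unfolding fam_filter_def
  proof (intro conjI ballI impI)
    show "F \<subseteq> L"
      unfolding F_def by blast
    show "{} \<notin> F"
    proof
      assume "{} \<in> F"
      then obtain S where "finite S" "S \<subseteq> \<C>" "X \<inter> \<Inter>S \<subseteq> {}"
        unfolding F_def by blast
      then show False
        using fip by blast
    qed
    show "F \<noteq> {}"
      unfolding F_def using top_in_lattice by blast
  next
    fix A B assume "A \<in> F" "B \<in> F"
    then obtain S T where "A \<in> L" "B \<in> L" "finite S" "S \<subseteq> \<C>" "X \<inter> \<Inter>S \<subseteq> A"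
      "finite T" "T \<subseteq> \<C>" "X \<inter> \<Inter>T \<subseteq> B"
      unfolding F_def by blast
    then show "A \<inter> B \<in> F"
      unfolding F_def using Int_in_lattice by (intro CollectI conjI exI[of _ "S \<union> T"]) auto
  next
    fix A B assume "A \<in> F" "B \<in> L" "A \<subseteq> B"
    then show "B \<in> F" unfolding F_def by blast
  qed
  moreover have "A \<in> F" if "A \<in> \<C>" for A
    unfolding F_def using that assms(1) by (intro CollectI conjI exI[of _ "{A}"]) auto
  then have "\<C> \<subseteq> F" by blast
  ultimately show ?thesis
    using fam_filter_extends_to_ultrafilter by blast
qed

end

section \<open>The Wallman space\<close>

lemma Diff_in_Cl: "U \<in> Op \<Longrightarrow> X - U \<in> Cl X Op"
  by (simp add: Cl_def)

locale wallman = set_lattice X Op for X :: "'a set" and Op :: "'a set set"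
begin

sublocale closed: set_lattice X "Cl X Op"
  by (rule Cl_lattice)

lemma mem_Wal: "p \<in> Wal X Op \<longleftrightarrow> fam_ultrafilter (Cl X Op) p"
  by (simp add: Wal_def)

lemma mem_wbox: "p \<in> wbox X Op A \<longleftrightarrow> fam_ultrafilter (Cl X Op) p \<and> A \<in> p"
  by (simp add: wbox_def Wal_def)

lemma wbox_Un:
  "A \<in> Cl X Op \<Longrightarrow> B \<in> Cl X Op \<Longrightarrow> wbox X Op (A \<union> B) = wbox X Op A \<union> wbox X Op B"
  by (auto simp: mem_wbox closed.ultrafilter_Un_iff)

lemma wbox_empty: "wbox X Op {} = {}"
  using fam_filter_empty[OF closed.ultrafilter_filter] by (auto simp: mem_wbox)

abbreviation wal_subbase :: "'a set set set set" where
  "wal_subbase \<equiv> (\<lambda>A. Wal X Op - wbox X Op A) ` Cl X Op"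

lemma topspace_wal_top: "topspace (wal_top X Op) = Wal X Op"
proof -
  have "Wal X Op - wbox X Op {} \<in> wal_subbase"
    using closed.empty_in_lattice by blast
  then have "Wal X Op \<subseteq> \<Union>wal_subbase"
    using wbox_empty by auto
  then show ?thesis
    unfolding wal_top_def by auto
qed

lemma openin_wal_top_iff:
  "openin (wal_top X Op) Q \<longleftrightarrow> (\<exists>Q0. generate_topology_on wal_subbase Q0 \<and> Q = Q0 \<inter> Wal X Op)"
  unfolding wal_top_def by (simp add: openin_subtopology openin_topology_generated_by_iff)

lemma openin_wal_top_basic: "A \<in> Cl X Op \<Longrightarrow> openin (wal_top X Op) (Wal X Op - wbox X Op A)"
  unfolding openin_wal_top_iff
  by (rule exI[of _ "Wal X Op - wbox X Op A"]) (auto intro: generate_topology_on.Basis)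

lemma closedin_wbox: "A \<in> Cl X Op \<Longrightarrow> closedin (wal_top X Op) (wbox X Op A)"
  unfolding closedin_def topspace_wal_top
  using openin_wal_top_basic by (auto simp: wbox_def)

lemma generate_topology_on_wal_nbhd:
  assumes "generate_topology_on wal_subbase Q" "p \<in> Q" "p \<in> Wal X Op"
  shows "\<exists>B\<in>Cl X Op. B \<notin> p \<and> Wal X Op - wbox X Op B \<subseteq> Q"
  using assms
proof (induction arbitrary: p rule: generate_topology_on.induct)
  case (Int Q1 Q2)
  then obtain B1 B2 where B: "B1 \<in> Cl X Op" "B1 \<notin> p" "Wal X Op - wbox X Op B1 \<subseteq> Q1"
    "B2 \<in> Cl X Op" "B2 \<notin> p" "Wal X Op - wbox X Op B2 \<subseteq> Q2"
    by blast
  have "B1 \<union> B2 \<notin> p"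
    using B closed.ultrafilter_Un_iff Int.prems(2) by (simp add: mem_Wal)
  moreover have "Wal X Op - wbox X Op (B1 \<union> B2) \<subseteq> Q1 \<inter> Q2"
    using B wbox_Un by auto
  ultimately show ?case
    using closed.Un_in_lattice B by blast
next
  case (UN K)
  then obtain Q where "Q \<in> K" "p \<in> Q" by blast
  then show ?case
    using UN.IH UN.prems by blast
next
  case (Basis Q)
  then obtain A where "A \<in> Cl X Op" "Q = Wal X Op - wbox X Op A" by blast
  then show ?case
    using Basis.prems by (auto simp: wbox_def)
qed simp

lemma openin_wal_top_nbhd:
  assumes "openin (wal_top X Op) Q" "p \<in> Q"
  shows "\<exists>B\<in>Cl X Op. B \<notin> p \<and> Wal X Op - wbox X Op B \<subseteq> Q"
proof -
  obtain Q0 where "generate_topology_on wal_subbase Q0" "Q = Q0 \<inter> Wal X Op"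
    using assms(1) unfolding openin_wal_top_iff by blast
  then show ?thesis
    using generate_topology_on_wal_nbhd[of Q0 p] assms(2) by blast
qed

lemma finite_Inter_empty_if_avoids:
  assumes "\<And>p. p \<in> Wal X Op \<Longrightarrow> B p \<in> Cl X Op \<and> B p \<notin> p"
  shows "\<exists>T\<subseteq>Wal X Op. finite T \<and> X \<inter> \<Inter>(B ` T) = {}"
proof -
  have "\<exists>S. finite S \<and> S \<subseteq> B ` Wal X Op \<and> X \<inter> \<Inter>S = {}"
  proof (rule ccontr)
    assume "\<nexists>S. finite S \<and> S \<subseteq> B ` Wal X Op \<and> X \<inter> \<Inter>S = {}"
    moreover have "B ` Wal X Op \<subseteq> Cl X Op"
      using assms by (intro image_subsetI) simp
    ultimately obtain q where q: "fam_ultrafilter (Cl X Op) q" "B ` Wal X Op \<subseteq> q"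
      using closed.ultrafilter_containing_fip[of "B ` Wal X Op"] by blast
    then have "q \<in> Wal X Op"
      by (simp add: mem_Wal)
    then show False
      using q(2) assms by blast
  qed
  then show ?thesis
    by (metis finite_subset_image)
qed

lemma compact_space_wal_top: "compact_space (wal_top X Op)"
  unfolding compact_space_alt topspace_wal_top
proof (intro allI impI)
  fix \<U> assume \<U>: "(\<forall>U\<in>\<U>. openin (wal_top X Op) U) \<and> Wal X Op \<subseteq> \<Union>\<U>"
  have nbhds: "\<forall>p\<in>Wal X Op. \<exists>B. \<exists>U. U \<in> \<U> \<and> B \<in> Cl X Op \<and> B \<notin> p \<and> Wal X Op - wbox X Op B \<subseteq> U"
  proof
    fix p assume "p \<in> Wal X Op"
    then obtain U where U: "U \<in> \<U>" "p \<in> U"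
      using \<U> by blast
    then have "openin (wal_top X Op) U"
      using \<U> by blast
    then obtain B where "B \<in> Cl X Op" "B \<notin> p" "Wal X Op - wbox X Op B \<subseteq> U"
      using openin_wal_top_nbhd U(2) by blast
    then show "\<exists>B. \<exists>U. U \<in> \<U> \<and> B \<in> Cl X Op \<and> B \<notin> p \<and> Wal X Op - wbox X Op B \<subseteq> U"
      using U(1) by blast
  qed
  obtain B where "\<forall>p\<in>Wal X Op. \<exists>U. U \<in> \<U> \<and> B p \<in> Cl X Op \<and> B p \<notin> p \<and> Wal X Op - wbox X Op (B p) \<subseteq> U"
    using bchoice[OF nbhds] ..
  from bchoice[OF this] obtain U where BU: "\<forall>p\<in>Wal X Op.
      U p \<in> \<U> \<and> B p \<in> Cl X Op \<and> B p \<notin> p \<and> Wal X Op - wbox X Op (B p) \<subseteq> U p"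
    ..
  obtain T where T: "T \<subseteq> Wal X Op" "finite T" "X \<inter> \<Inter>(B ` T) = {}"
    using finite_Inter_empty_if_avoids[of B] BU by blast
  have "Wal X Op \<subseteq> \<Union>(U ` T)"
  proof
    fix p assume p: "p \<in> Wal X Op"
    have "\<not> B ` T \<subseteq> p"
    proof
      assume "B ` T \<subseteq> p"
      then have "X \<inter> \<Inter>(B ` T) \<in> p"
        using closed.ultrafilter_Inter p T(2) by (simp add: mem_Wal)
      then show False
        using T(3) fam_filter_empty[OF closed.ultrafilter_filter] p by (simp add: mem_Wal)
    qed
    then obtain t where "t \<in> T" "B t \<notin> p"
      by blast
    then have "p \<in> U t"
      using BU T(1) p by (auto simp: wbox_def)
    then show "p \<in> \<Union>(U ` T)"
      using \<open>t \<in> T\<close> by blast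
  qed
  then show "\<exists>\<F>. finite \<F> \<and> \<F> \<subseteq> \<U> \<and> Wal X Op \<subseteq> \<Union>\<F>"
    using T BU by (intro exI[of _ "U ` T"]) auto
qed

end

locale weakly_normal_wallman = wallman +
  assumes weakly_normal: "weakly_normal X Op"
begin

text \<open>Weak normality is what makes the trace filter of a point maximal: a closed set \<open>C\<close>
  missing \<open>x\<close> is separated from \<open>x\<close> by disjoint open sets \<open>U \<supseteq> C\<close> and \<open>V \<ni> x\<close>,
  and then \<open>X - U\<close> belongs to the trace filter of \<open>x\<close> but misses \<open>C\<close>.\<close>

lemma wmap_in_Wal:
  assumes x: "x \<in> X"
  shows "wmap X Op x \<in> Wal X Op"
proof -
  have filter: "fam_filter (Cl X Op) (wmap X Op x)"
    unfolding fam_filter_def wmap_def using x closed.top_in_lattice closed.Int_in_lattice by auto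
  have "H \<subseteq> wmap X Op x" if H: "fam_filter (Cl X Op) H" "wmap X Op x \<subseteq> H" for H
  proof
    fix C assume "C \<in> H"
    then have C: "C \<in> Cl X Op"
      using fam_filter_subset[OF H(1)] by blast
    show "C \<in> wmap X Op x"
    proof (rule ccontr)
      assume "C \<notin> wmap X Op x"
      then have "C \<inter> {x} = {}"
        using C by (simp add: wmap_def)
      then obtain U V where UV: "U \<in> Op" "V \<in> Op" "C \<subseteq> U" "{x} \<subseteq> V" "U \<inter> V = {}"
        using weakly_normal[unfolded weakly_normal_def, rule_format, of C "{x}"] x C by blast
      then have "X - U \<in> wmap X Op x"
        using x Diff_in_Cl by (auto simp: wmap_def)
      then have "C \<inter> (X - U) \<in> H"
        using fam_filter_Int[OF H(1) \<open>C \<in> H\<close>] H(2) by blast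
      moreover have "C \<inter> (X - U) = {}"
        using UV(3) by blast
      ultimately show False
        using fam_filter_empty[OF H(1)] by simp
    qed
  qed
  then show ?thesis
    unfolding Wal_def fam_ultrafilter_def using filter by blast
qed

lemma closure_of_wmap_image:
  assumes A: "A \<in> Cl X Op"
  shows "wal_top X Op closure_of (wmap X Op ` A) = wbox X Op A"
proof
  have "wmap X Op ` A \<subseteq> wbox X Op A"
    using A closed.lattice_subset wmap_in_Wal by (auto simp: wbox_def wmap_def)
  then show "wal_top X Op closure_of (wmap X Op ` A) \<subseteq> wbox X Op A"
    using closure_of_minimal closedin_wbox[OF A] by blast
next
  show "wbox X Op A \<subseteq> wal_top X Op closure_of (wmap X Op ` A)"
  proof
    fix p assume "p \<in> wbox X Op A"
    then have p: "p \<in> Wal X Op" and "A \<in> p"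
      by (auto simp: wbox_def)
    show "p \<in> wal_top X Op closure_of (wmap X Op ` A)"
      unfolding in_closure_of topspace_wal_top
    proof (intro conjI allI impI p)
      fix Q assume "p \<in> Q \<and> openin (wal_top X Op) Q"
      then obtain B where B: "B \<in> Cl X Op" "B \<notin> p" "Wal X Op - wbox X Op B \<subseteq> Q"
        using openin_wal_top_nbhd by blast
      have "\<not> A \<subseteq> B"
        using fam_filter_mono[OF closed.ultrafilter_filter \<open>A \<in> p\<close> B(1)] p B(2)
        by (auto simp: mem_Wal)
      then obtain a where a: "a \<in> A" "a \<notin> B"
        by blast
      then have "wmap X Op a \<in> Wal X Op"
        using A closed.lattice_subset wmap_in_Wal by blast
      moreover have "B \<notin> wmap X Op a"
        using a by (simp add: wmap_def)
      ultimately have "wmap X Op a \<in> Q"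
        using B(3) by (auto simp: wbox_def)
      then show "\<exists>y. y \<in> wmap X Op ` A \<and> y \<in> Q"
        using a by blast
    qed
  qed
qed

lemma Ex_eq: "U \<in> Op \<Longrightarrow> Ex X Op U = Wal X Op - wbox X Op (X - U)"
  by (simp add: Ex_def closure_of_wmap_image Diff_in_Cl)

lemma pullback_wmap_Ex:
  assumes U: "U \<in> Op"
  shows "{x \<in> X. wmap X Op x \<in> Ex X Op U} = U"
proof -
  have "wmap X Op x \<in> Ex X Op U \<longleftrightarrow> x \<in> U" if "x \<in> X" for x
    using that wmap_in_Wal Diff_in_Cl[OF U] by (auto simp: Ex_eq[OF U] wbox_def wmap_def)
  then show ?thesis
    using U lattice_subset by blast
qed

lemma Ex_Int: "U \<in> Op \<Longrightarrow> V \<in> Op \<Longrightarrow> Ex X Op (U \<inter> V) = Ex X Op U \<inter> Ex X Op V"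
  using Ex_eq Int_in_lattice wbox_Un[OF Diff_in_Cl Diff_in_Cl] by (auto simp: Diff_Int)

lemma Ex_top: "Ex X Op X = Wal X Op"
  using Ex_eq[OF top_in_lattice] wbox_empty by simp

lemma Ex_subset: "Ex X Op U \<subseteq> Wal X Op"
  by (auto simp: Ex_def)

lemma openin_Ex: "U \<in> Op \<Longrightarrow> openin (wal_top X Op) (Ex X Op U)"
  by (simp add: Ex_eq openin_wal_top_basic Diff_in_Cl)

lemma Covw_eq:
  "Covw X Op Cov = {\<V>. \<V> \<subseteq> Ex X Op ` Op \<and> (\<lambda>V. {x \<in> X. wmap X Op x \<in> V}) ` \<V> \<in> Cov}"
proof -
  have "Ex X Op ` Op \<subseteq> OpS X Op"
    unfolding OpS_def using openin_Ex pullback_wmap_Ex by auto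
  then show ?thesis
    unfolding Covw_def CovS_def Opw_def by blast
qed

end

section \<open>Transporting a generalized topology along a lattice embedding\<close>

lemma gtsI:
  assumes "Op \<subseteq> Pow X" "Cov \<subseteq> Pow Op" "{} \<in> Op" "X \<in> Op"
    and "\<And>U V. U \<in> Op \<Longrightarrow> V \<in> Op \<Longrightarrow> U \<union> V \<in> Op"
    and "\<And>U V. U \<in> Op \<Longrightarrow> V \<in> Op \<Longrightarrow> U \<inter> V \<in> Op"
    and "\<And>\<U>. finite \<U> \<Longrightarrow> \<U> \<subseteq> Op \<Longrightarrow> \<U> \<in> Cov"
    and "\<And>\<U>. \<U> \<in> Cov \<Longrightarrow> \<Union>\<U> \<in> Op"
    and "\<And>\<U> V. \<U> \<in> Cov \<Longrightarrow> V \<in> Op \<Longrightarrow> V \<subseteq> \<Union>\<U> \<Longrightarrow> (\<lambda>U. V \<inter> U) ` \<U> \<in> Cov"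
    and "\<And>\<U> \<V>. \<U> \<in> Cov \<Longrightarrow> (\<And>U. U \<in> \<U> \<Longrightarrow> \<V> U \<in> Cov \<and> \<Union>(\<V> U) = U)
      \<Longrightarrow> \<Union>(\<V> ` \<U>) \<in> Cov"
    and "\<And>\<U> \<V>. \<U> \<in> Cov \<Longrightarrow> \<V> \<subseteq> Op \<Longrightarrow> \<Union>\<V> = \<Union>\<U> \<Longrightarrow> (\<And>U. U \<in> \<U> \<Longrightarrow> \<exists>V\<in>\<V>. U \<subseteq> V)
      \<Longrightarrow> \<V> \<in> Cov"
    and "\<And>\<U> V. \<U> \<in> Cov \<Longrightarrow> V \<subseteq> \<Union>\<U> \<Longrightarrow> (\<And>U. U \<in> \<U> \<Longrightarrow> V \<inter> U \<in> Op) \<Longrightarrow> V \<in> Op"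
  shows "gts X Op Cov"
  unfolding gts_def
proof (intro conjI)
  show "\<forall>U\<in>Op. \<forall>V\<in>Op. U \<union> V \<in> Op \<and> U \<inter> V \<in> Op"
    using assms(5,6) by blast
  show "\<forall>\<U>. finite \<U> \<and> \<U> \<subseteq> Op \<longrightarrow> \<U> \<in> Cov"
    using assms(7) by blast
  show "\<forall>\<U>\<in>Cov. \<Union>\<U> \<in> Op"
    using assms(8) by blast
  show "\<forall>\<U>\<in>Cov. \<forall>V\<in>Op. V \<subseteq> \<Union>\<U> \<longrightarrow> (\<lambda>U. V \<inter> U) ` \<U> \<in> Cov"
    using assms(9) by blast
  show "\<forall>\<U>\<in>Cov. \<forall>\<V>. (\<forall>U\<in>\<U>. \<V> U \<in> Cov \<and> \<Union>(\<V> U) = U) \<longrightarrow> \<Union>(\<V> ` \<U>) \<in> Cov"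
    by (intro ballI allI impI, rule assms(10)) auto
  show "\<forall>\<U>\<in>Cov. \<forall>\<V>. \<V> \<subseteq> Op \<and> \<Union>\<V> = \<Union>\<U> \<and> (\<forall>U\<in>\<U>. \<exists>V\<in>\<V>. U \<subseteq> V) \<longrightarrow> \<V> \<in> Cov"
    by (intro ballI allI impI, elim conjE, rule assms(11)) auto
  show "\<forall>\<U>\<in>Cov. \<forall>V. V \<subseteq> \<Union>\<U> \<and> (\<forall>U\<in>\<U>. V \<inter> U \<in> Op) \<longrightarrow> V \<in> Op"
    by (intro ballI allI impI, elim conjE, rule assms(12)) auto
qed (fact assms)+

lemma gtsD:
  assumes "gts X Op Cov"
  shows "Op \<subseteq> Pow X" and "Cov \<subseteq> Pow Op" and "{} \<in> Op" and "X \<in> Op"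
    and "\<forall>U\<in>Op. \<forall>V\<in>Op. U \<union> V \<in> Op \<and> U \<inter> V \<in> Op"
    and "\<forall>\<U>. finite \<U> \<and> \<U> \<subseteq> Op \<longrightarrow> \<U> \<in> Cov"
    and "\<forall>\<U>\<in>Cov. \<Union>\<U> \<in> Op"
    and "\<forall>\<U>\<in>Cov. \<forall>V\<in>Op. V \<subseteq> \<Union>\<U> \<longrightarrow> (\<lambda>U. V \<inter> U) ` \<U> \<in> Cov"
    and "\<forall>\<U>\<in>Cov. \<forall>\<V>. (\<forall>U\<in>\<U>. \<V> U \<in> Cov \<and> \<Union>(\<V> U) = U) \<longrightarrow> \<Union>(\<V> ` \<U>) \<in> Cov"
    and "\<forall>\<U>\<in>Cov. \<forall>\<V>. \<V> \<subseteq> Op \<and> \<Union>\<V> = \<Union>\<U> \<and> (\<forall>U\<in>\<U>. \<exists>V\<in>\<V>. U \<subseteq> V) \<longrightarrow> \<V> \<in> Cov"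
    and "\<forall>\<U>\<in>Cov. \<forall>V. V \<subseteq> \<Union>\<U> \<and> (\<forall>U\<in>\<U>. V \<inter> U \<in> Op) \<longrightarrow> V \<in> Op"
  using assms unfolding gts_def by - (elim conjE, assumption)+

context
  fixes X :: "'a set" and Op :: "'a set set" and Cov :: "'a set set set"
  assumes gts: "gts X Op Cov"
begin

lemma gts_set_lattice: "set_lattice X Op"
  using gtsD(1,3,4,5)[OF gts] by unfold_locales blast+

lemma gts_cover_subset: "\<U> \<in> Cov \<Longrightarrow> \<U> \<subseteq> Op"
  using gtsD(2)[OF gts] by blast

lemma gts_finite_cover: "finite \<U> \<Longrightarrow> \<U> \<subseteq> Op \<Longrightarrow> \<U> \<in> Cov"
  using gtsD(6)[OF gts] by blast

lemma gts_Union_cover: "\<U> \<in> Cov \<Longrightarrow> \<Union>\<U> \<in> Op"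
  using gtsD(7)[OF gts] by blast

lemma gts_cover_Int: "\<U> \<in> Cov \<Longrightarrow> V \<in> Op \<Longrightarrow> V \<subseteq> \<Union>\<U> \<Longrightarrow> (\<lambda>U. V \<inter> U) ` \<U> \<in> Cov"
  using gtsD(8)[OF gts] by blast

lemma gts_cover_refine:
  "\<U> \<in> Cov \<Longrightarrow> (\<And>U. U \<in> \<U> \<Longrightarrow> \<V> U \<in> Cov \<and> \<Union>(\<V> U) = U) \<Longrightarrow> \<Union>(\<V> ` \<U>) \<in> Cov"
  by (rule gtsD(9)[OF gts, THEN bspec, THEN spec, THEN mp]) auto

lemma gts_cover_coarsen:
  "\<U> \<in> Cov \<Longrightarrow> \<V> \<subseteq> Op \<Longrightarrow> \<Union>\<V> = \<Union>\<U> \<Longrightarrow> (\<And>U. U \<in> \<U> \<Longrightarrow> \<exists>V\<in>\<V>. U \<subseteq> V) \<Longrightarrow> \<V> \<in> Cov"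
  by (rule gtsD(10)[OF gts, THEN bspec, THEN spec, THEN mp]) auto

lemma gts_open_if_locally_open:
  "\<U> \<in> Cov \<Longrightarrow> V \<subseteq> \<Union>\<U> \<Longrightarrow> (\<And>U. U \<in> \<U> \<Longrightarrow> V \<inter> U \<in> Op) \<Longrightarrow> V \<in> Op"
  by (rule gtsD(11)[OF gts, THEN bspec, THEN spec, THEN mp]) auto

end

locale gts_embedding =
  fixes X :: "'a set" and Op :: "'a set set" and Cov :: "'a set set set"
    and W :: "'b set" and w :: "'a \<Rightarrow> 'b" and E :: "'a set \<Rightarrow> 'b set"
  assumes gts: "gts X Op Cov"
    and pullback_E: "U \<in> Op \<Longrightarrow> {x \<in> X. w x \<in> E U} = U"
    and E_subset: "U \<in> Op \<Longrightarrow> E U \<subseteq> W"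
    and E_top: "E X = W"
    and E_Int: "U \<in> Op \<Longrightarrow> V \<in> Op \<Longrightarrow> E (U \<inter> V) = E U \<inter> E V"
begin

abbreviation pullback :: "'b set \<Rightarrow> 'a set" where
  "pullback V \<equiv> {x \<in> X. w x \<in> V}"

definition image_Cov :: "'b set set set" where
  "image_Cov = {\<V>. \<V> \<subseteq> E ` Op \<and> pullback ` \<V> \<in> Cov}"

lemma E_pullback: "V \<in> E ` Op \<Longrightarrow> pullback V \<in> Op \<and> E (pullback V) = V"
  using pullback_E by auto

lemma pullback_Union: "pullback (\<Union>\<V>) = \<Union>(pullback ` \<V>)"
  by auto

lemma pullback_image_E: "\<U> \<subseteq> Op \<Longrightarrow> pullback ` E ` \<U> = \<U>"
proof -
  assume "\<U> \<subseteq> Op"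
  then have "pullback (E U) = U" if "U \<in> \<U>" for U
    using that pullback_E by blast
  then show ?thesis
    by (simp add: image_image)
qed

lemma pullback_Union_E: "\<U> \<subseteq> Op \<Longrightarrow> pullback (\<Union>(E ` \<U>)) = \<Union>\<U>"
  using pullback_image_E by blast

lemma E_mono:
  assumes "U \<in> Op" "V \<in> Op" "U \<subseteq> V"
  shows "E U \<subseteq> E V"
proof -
  have "E U = E (U \<inter> V)"
    using assms(3) by (simp add: Int_absorb2)
  also have "\<dots> = E U \<inter> E V"
    using assms(1,2) by (rule E_Int)
  finally show ?thesis
    by blast
qed

lemma E_subset_iff: "U \<in> Op \<Longrightarrow> V \<in> Op \<Longrightarrow> E U \<subseteq> E V \<longleftrightarrow> U \<subseteq> V"
proof
  assume "U \<in> Op" "V \<in> Op" "E U \<subseteq> E V"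
  then have "pullback (E U) \<subseteq> pullback (E V)"
    by blast
  then show "U \<subseteq> V"
    using pullback_E \<open>U \<in> Op\<close> \<open>V \<in> Op\<close> by simp
qed (rule E_mono)

lemma pullback_Int_E:
  assumes "V' \<inter> E U \<in> E ` Op" "U \<in> Op"
  shows "pullback V' \<inter> U \<in> Op \<and> V' \<inter> E U = E (pullback V' \<inter> U)"
proof -
  have "pullback (V' \<inter> E U) \<in> Op \<and> E (pullback (V' \<inter> E U)) = V' \<inter> E U"
    using assms(1) by (rule E_pullback)
  moreover have "pullback (V' \<inter> E U) = pullback V' \<inter> U"
    using pullback_E[OF assms(2)] by auto
  ultimately show ?thesis
    by auto
qed

lemma image_Cov_iff: "\<V> \<in> image_Cov \<longleftrightarrow> (\<exists>\<U>\<in>Cov. \<V> = E ` \<U>)"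
proof
  assume \<V>: "\<V> \<in> image_Cov"
  have "E (pullback V) = V" if "V \<in> \<V>" for V
    using that \<V> E_pullback unfolding image_Cov_def by blast
  then have "E ` pullback ` \<V> = \<V>"
    by (simp add: image_image)
  then show "\<exists>\<U>\<in>Cov. \<V> = E ` \<U>"
    using \<V> unfolding image_Cov_def by (metis (no_types, lifting) mem_Collect_eq)
next
  assume "\<exists>\<U>\<in>Cov. \<V> = E ` \<U>"
  then obtain \<U> where "\<U> \<in> Cov" "\<V> = E ` \<U>" ..
  then show "\<V> \<in> image_Cov"
    unfolding image_Cov_def using gts_cover_subset[OF gts] pullback_image_E by auto
qed

lemma image_mem_image_Cov: "\<U> \<in> Cov \<Longrightarrow> E ` \<U> \<in> image_Cov"
  using image_Cov_iff by blast

lemma image_CovE: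
  assumes "\<V> \<in> image_Cov"
  obtains \<U> where "\<U> \<in> Cov" "\<V> = E ` \<U>"
  using assms image_Cov_iff by blast

lemma Union_image_Cov: "\<Union>image_Cov = E ` Op"
proof
  show "\<Union>image_Cov \<subseteq> E ` Op"
    unfolding image_Cov_def by blast
  show "E ` Op \<subseteq> \<Union>image_Cov"
  proof
    fix V assume "V \<in> E ` Op"
    then obtain U where "U \<in> Op" "V = E U" by blast
    then have "{U} \<in> Cov"
      using gts_finite_cover[OF gts] by simp
    then have "E ` {U} \<in> image_Cov"
      by (rule image_mem_image_Cov)
    then show "V \<in> \<Union>image_Cov"
      using \<open>V = E U\<close> by blast
  qed
qed

lemma image_Cov_finite:
  assumes "finite \<V>" "\<V> \<subseteq> E ` Op"
  shows "\<V> \<in> image_Cov"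
proof -
  have "pullback ` \<V> \<subseteq> Op"
    using assms(2) E_pullback by blast
  then have "pullback ` \<V> \<in> Cov"
    using gts_finite_cover[OF gts] assms(1) by simp
  then show ?thesis
    unfolding image_Cov_def using assms(2) by blast
qed

lemma image_Cov_refine:
  assumes \<V>: "\<V> \<in> image_Cov" and f: "\<And>V. V \<in> \<V> \<Longrightarrow> f V \<in> image_Cov \<and> \<Union>(f V) = V"
  shows "\<Union>(f ` \<V>) \<in> image_Cov"
proof -
  obtain \<U> where \<U>: "\<U> \<in> Cov" "\<V> = E ` \<U>"
    using \<V> by (rule image_CovE)
  have pullbacks: "pullback ` f (E U) \<in> Cov \<and> \<Union>(pullback ` f (E U)) = U" if "U \<in> \<U>" for U
  proof -
    have "f (E U) \<in> image_Cov" "\<Union>(f (E U)) = E U"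
      using f \<U>(2) that by auto
    moreover have "pullback (E U) = U"
      using pullback_E gts_cover_subset[OF gts \<U>(1)] that by blast
    ultimately show ?thesis
      unfolding image_Cov_def by (simp flip: pullback_Union)
  qed
  have "\<Union>((\<lambda>U. pullback ` f (E U)) ` \<U>) \<in> Cov"
    by (rule gts_cover_refine[OF gts \<U>(1) pullbacks])
  moreover have "\<Union>((\<lambda>U. pullback ` f (E U)) ` \<U>) = pullback ` \<Union>(f ` \<V>)"
    using \<U>(2) by auto
  moreover have "\<Union>(f ` \<V>) \<subseteq> E ` Op"
    using f unfolding image_Cov_def by blast
  ultimately show ?thesis
    unfolding image_Cov_def by simp
qed

lemma image_Cov_coarsen:
  assumes \<V>: "\<V> \<in> image_Cov" and \<W>: "\<W> \<subseteq> E ` Op" "\<Union>\<W> = \<Union>\<V>"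
    and refines: "\<And>V. V \<in> \<V> \<Longrightarrow> \<exists>W\<in>\<W>. V \<subseteq> W"
  shows "\<W> \<in> image_Cov"
proof -
  obtain \<U> where \<U>: "\<U> \<in> Cov" "\<V> = E ` \<U>"
    using \<V> by (rule image_CovE)
  have "pullback ` \<W> \<subseteq> Op"
    using \<W>(1) E_pullback by blast
  moreover have "\<Union>(pullback ` \<W>) = \<Union>\<U>"
    using \<W>(2) \<U> pullback_Union_E[OF gts_cover_subset[OF gts \<U>(1)]] by (simp flip: pullback_Union)
  moreover have "\<exists>V\<in>pullback ` \<W>. U \<subseteq> V" if "U \<in> \<U>" for U
  proof -
    have "E U \<in> \<V>"
      using \<U>(2) that by simp
    then obtain W where W: "W \<in> \<W>" "E U \<subseteq> W"
      using refines by blast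
    have "pullback (E U) = U"
      using pullback_E gts_cover_subset[OF gts \<U>(1)] that by blast
    moreover have "pullback (E U) \<subseteq> pullback W"
      using W(2) by blast
    ultimately show ?thesis
      using W(1) by blast
  qed
  ultimately have "pullback ` \<W> \<in> Cov"
    by (intro gts_cover_coarsen[OF gts \<U>(1)])
  then show ?thesis
    unfolding image_Cov_def using \<W>(1) by blast
qed

lemma additive_if_gts:
  assumes "gts W (E ` Op) image_Cov" "\<U> \<in> Cov"
  shows "E (\<Union>\<U>) = \<Union>(E ` \<U>)"
proof -
  obtain V where V: "V \<in> Op" "\<Union>(E ` \<U>) = E V"
    using gts_Union_cover[OF assms(1) image_mem_image_Cov[OF assms(2)]] by blast
  have "V = \<Union>\<U>"
    using pullback_E[OF V(1)] pullback_Union_E[OF gts_cover_subset[OF gts assms(2)]] V(2) by simp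
  then show ?thesis
    using V(2) by simp
qed

context
  assumes additive: "\<And>\<U>. \<U> \<in> Cov \<Longrightarrow> E (\<Union>\<U>) = \<Union>(E ` \<U>)"
begin

lemma E_empty: "E {} = {}"
proof -
  have "{} \<in> Cov"
    using gts_finite_cover[OF gts] by simp
  then show ?thesis
    using additive[of "{}"] by simp
qed

lemma E_Un:
  assumes "U \<in> Op" "V \<in> Op"
  shows "E (U \<union> V) = E U \<union> E V"
proof -
  have "{U, V} \<in> Cov"
    using gts_finite_cover[OF gts] assms by simp
  then show ?thesis
    using additive[of "{U, V}"] by simp
qed

lemma Union_image_Cov_mem:
  assumes "\<V> \<in> image_Cov"
  shows "\<Union>\<V> \<in> E ` Op"
proof -
  obtain \<U> where \<U>: "\<U> \<in> Cov" "\<V> = E ` \<U>"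
    using assms by (rule image_CovE)
  then have "\<Union>\<V> = E (\<Union>\<U>)"
    using additive by simp
  then show ?thesis
    using gts_Union_cover[OF gts \<U>(1)] by simp
qed

lemma image_Cov_Int:
  assumes \<V>: "\<V> \<in> image_Cov" and V': "V' \<in> E ` Op" "V' \<subseteq> \<Union>\<V>"
  shows "(\<lambda>U. V' \<inter> U) ` \<V> \<in> image_Cov"
proof -
  obtain \<U> where \<U>: "\<U> \<in> Cov" "\<V> = E ` \<U>"
    using \<V> by (rule image_CovE)
  obtain V where V: "V \<in> Op" "V' = E V"
    using V'(1) by blast
  have "E V \<subseteq> E (\<Union>\<U>)"
    using V'(2) V(2) \<U>(2) additive[OF \<U>(1)] by simp
  then have "V \<subseteq> \<Union>\<U>"
    using E_subset_iff[OF V(1) gts_Union_cover[OF gts \<U>(1)]] by simp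
  have "(\<lambda>U. E V \<inter> E U) ` \<U> = (\<lambda>U. E (V \<inter> U)) ` \<U>"
  proof (rule image_cong)
    fix U assume "U \<in> \<U>"
    then show "E V \<inter> E U = E (V \<inter> U)"
      using E_Int[OF V(1)] gts_cover_subset[OF gts \<U>(1)] by auto
  qed simp
  then have "(\<lambda>U. V' \<inter> U) ` \<V> = E ` (\<lambda>U. V \<inter> U) ` \<U>"
    by (simp add: \<U>(2) V(2) image_image)
  then show ?thesis
    using image_mem_image_Cov[OF gts_cover_Int[OF gts \<U>(1) V(1) \<open>V \<subseteq> \<Union>\<U>\<close>]] by simp
qed

lemma image_Cov_locally_open:
  assumes \<V>: "\<V> \<in> image_Cov" and V': "V' \<subseteq> \<Union>\<V>"
    and locally: "\<And>U. U \<in> \<V> \<Longrightarrow> V' \<inter> U \<in> E ` Op"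
  shows "V' \<in> E ` Op"
proof -
  obtain \<U> where \<U>: "\<U> \<in> Cov" "\<V> = E ` \<U>"
    using \<V> by (rule image_CovE)
  have \<U>_Op: "U \<in> Op" if "U \<in> \<U>" for U
    using gts_cover_subset[OF gts \<U>(1)] that by blast
  define V where "V = pullback V'"
  have pieces: "V \<inter> U \<in> Op \<and> V' \<inter> E U = E (V \<inter> U)" if U: "U \<in> \<U>" for U
    unfolding V_def by (rule pullback_Int_E[OF locally \<U>_Op[OF U]]) (simp add: \<U>(2) U)
  have "V \<subseteq> pullback (\<Union>\<V>)"
    unfolding V_def using V' by blast
  then have "V \<subseteq> \<Union>\<U>"
    using pullback_Union_E[OF gts_cover_subset[OF gts \<U>(1)]] \<U>(2) by simp
  have V_Op: "V \<in> Op"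
    by (rule gts_open_if_locally_open[OF gts \<U>(1) \<open>V \<subseteq> \<Union>\<U>\<close> conjunct1[OF pieces]])
  have "V' \<subseteq> \<Union>(E ` \<U>)"
    using V' \<U>(2) by simp
  then have "V' = (\<Union>U\<in>\<U>. V' \<inter> E U)"
    by blast
  also have "\<dots> = (\<Union>U\<in>\<U>. E V \<inter> E U)"
  proof (rule SUP_cong[OF refl])
    fix U assume U: "U \<in> \<U>"
    show "V' \<inter> E U = E V \<inter> E U"
      using conjunct2[OF pieces[OF U]] E_Int[OF V_Op \<U>_Op[OF U]] by simp
  qed
  also have "\<dots> = E V \<inter> E (\<Union>\<U>)"
    by (subst additive[OF \<U>(1)]) blast
  also have "\<dots> = E V"
    using E_mono[OF V_Op gts_Union_cover[OF gts \<U>(1)] \<open>V \<subseteq> \<Union>\<U>\<close>] by blast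
  finally show ?thesis
    using V_Op by simp
qed

lemma gts_image_Cov: "gts W (E ` Op) image_Cov"
proof (rule gtsI)
  have Op: "set_lattice X Op"
    by (rule gts_set_lattice[OF gts])
  show "E ` Op \<subseteq> Pow W"
    using E_subset by blast
  show "image_Cov \<subseteq> Pow (E ` Op)"
    unfolding image_Cov_def by blast
  show "{} \<in> E ` Op"
    using set_lattice.empty_in_lattice[OF Op] E_empty by (metis imageI)
  show "W \<in> E ` Op"
    using set_lattice.top_in_lattice[OF Op] E_top by (metis imageI)
  show "U \<union> V \<in> E ` Op" "U \<inter> V \<in> E ` Op" if UV: "U \<in> E ` Op" "V \<in> E ` Op" for U V
  proof -
    obtain U0 V0 where "U0 \<in> Op" "V0 \<in> Op" "U = E U0" "V = E V0"
      using UV by blast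
    moreover have "U0 \<union> V0 \<in> Op" "U0 \<inter> V0 \<in> Op"
      using set_lattice.Un_in_lattice[OF Op] set_lattice.Int_in_lattice[OF Op] calculation by simp_all
    ultimately show "U \<union> V \<in> E ` Op" "U \<inter> V \<in> E ` Op"
      using E_Un E_Int by (metis imageI)+
  qed
  show "\<And>\<V>. finite \<V> \<Longrightarrow> \<V> \<subseteq> E ` Op \<Longrightarrow> \<V> \<in> image_Cov"
    by (rule image_Cov_finite)
  show "\<And>\<V>. \<V> \<in> image_Cov \<Longrightarrow> \<Union>\<V> \<in> E ` Op"
    by (rule Union_image_Cov_mem)
  show "\<And>\<V> V. \<V> \<in> image_Cov \<Longrightarrow> V \<in> E ` Op \<Longrightarrow> V \<subseteq> \<Union>\<V> \<Longrightarrow> (\<lambda>U. V \<inter> U) ` \<V> \<in> image_Cov"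
    by (rule image_Cov_Int)
  show "\<And>\<V> f. \<V> \<in> image_Cov \<Longrightarrow> (\<And>V. V \<in> \<V> \<Longrightarrow> f V \<in> image_Cov \<and> \<Union>(f V) = V)
      \<Longrightarrow> \<Union>(f ` \<V>) \<in> image_Cov"
    by (rule image_Cov_refine)
  show "\<And>\<V> \<W>. \<V> \<in> image_Cov \<Longrightarrow> \<W> \<subseteq> E ` Op \<Longrightarrow> \<Union>\<W> = \<Union>\<V>
      \<Longrightarrow> (\<And>V. V \<in> \<V> \<Longrightarrow> \<exists>W\<in>\<W>. V \<subseteq> W) \<Longrightarrow> \<W> \<in> image_Cov"
    by (rule image_Cov_coarsen)
  show "\<And>\<V> V. \<V> \<in> image_Cov \<Longrightarrow> V \<subseteq> \<Union>\<V> \<Longrightarrow> (\<And>U. U \<in> \<V> \<Longrightarrow> V \<inter> U \<in> E ` Op)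
      \<Longrightarrow> V \<in> E ` Op"
    by (rule image_Cov_locally_open)
qed

end

lemma gts_image_Cov_iff_additive:
  "gts W (E ` Op) image_Cov \<longleftrightarrow> (\<forall>\<U>\<in>Cov. E (\<Union>\<U>) = \<Union>(E ` \<U>))"
proof
  assume "gts W (E ` Op) image_Cov"
  then show "\<forall>\<U>\<in>Cov. E (\<Union>\<U>) = \<Union>(E ` \<U>)"
    using additive_if_gts by blast
next
  assume additive: "\<forall>\<U>\<in>Cov. E (\<Union>\<U>) = \<Union>(E ` \<U>)"
  show "gts W (E ` Op) image_Cov"
    by (rule gts_image_Cov) (simp add: additive)
qed

end

theorem theorem5p19:
  fixes X :: "'a set" and Op :: "'a set set" and Cov :: "'a set set set"
  assumes "gts X Op Cov" and "weakly_normal X Op"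
  shows "has_wallman_strict_compactification X Op Cov \<longleftrightarrow> admissibly_additive X Op Cov"
proof -
  interpret weakly_normal_wallman X Op
    using gts_set_lattice[OF assms(1)] assms(2)
    by (simp add: weakly_normal_wallman_def wallman_def weakly_normal_wallman_axioms_def)
  interpret gts_embedding X Op Cov "Wal X Op" "wmap X Op" "Ex X Op"
    using assms(1) pullback_wmap_Ex Ex_subset Ex_top Ex_Int by unfold_locales
  have "Covw X Op Cov = image_Cov"
    by (simp add: Covw_eq image_Cov_def)
  then show ?thesis
    unfolding has_wallman_strict_compactification_def gen_topology_in_def admissibly_additive_def
    using compact_space_wal_top Union_image_Cov gts_image_Cov_iff_additive by simp
qed

end
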